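(* Let $V$ be a set of $n$ vertices and let $\mathcal{T}$ be a set (so no repeated members) of triangles on $V$ having no rainbow triangle. Then $|\mathcal{T}| \le \frac{n^2}{8}$.
   Context: A triangle on $V$ is a $3$-element subset $\{x,y,z\}\subseteq V$, identified with its edge set $\{\{x,y\},\{y,z\},\{x,z\}\}$. For a family $\mathcal{T}$ of triangles, a rainbow triangle is a triangle $\{x,y,z\}$ on $V$ together with three distinct members $t_1,t_2,t_3$ of $\mathcal{T}$ (distinct as members of the family) such that $\{x,y\}$ is an edge of $t_1$, $\{y,z\}$ is an edge of $t_2$ and $\{x,z\}$ is an edge of $t_3$. In other words, the three edges of $\{x,y,z\}$ can be taken, each from a different member of $\mathcal{T}$. *)

theory Defs
  imports Complex_Main
begin

definition triangle_on :: "'a set \<Rightarrow> 'a set \<Rightarrow> bool" where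
  "triangle_on V t \<longleftrightarrow> t \<subseteq> V \<and> card t = 3"

definition has_rainbow_triangle :: "'a set \<Rightarrow> 'a set set \<Rightarrow> bool" where
  "has_rainbow_triangle V T \<longleftrightarrow>
     (\<exists>x y z t1 t2 t3. triangle_on V {x, y, z} \<and>
        t1 \<in> T \<and> t2 \<in> T \<and> t3 \<in> T \<and> t1 \<noteq> t2 \<and> t1 \<noteq> t3 \<and> t2 \<noteq> t3 \<and>
        {x, y} \<subseteq> t1 \<and> {y, z} \<subseteq> t2 \<and> {x, z} \<subseteq> t3)"

end

theory Submission
  imports Defs
begin

text \<open>Call an edge of a member t of T private if no other member of T contains it. If two edges
  uv, vw of t were both non-private, say contained in t1 \<noteq> t and t2 \<noteq> t, then t1 \<noteq> t2
  (otherwise t1 would contain all of t) and t1, t2, t would form a rainbow triangle on {u,v,w};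
  so every member of a rainbow-free family has at least two private edges. Choosing two private
  edges of each member gives a graph with 2|T| edges. It is triangle-free: the edges of a triangle
  would be private edges of members t1, t2, t3, which are either pairwise distinct (a rainbow
  triangle) or all equal (three edges chosen from one member). By Mantel's theorem the graph has
  at most n^2/4 edges.\<close>

definition triangle_free :: "'a set set \<Rightarrow> bool" where
  "triangle_free E \<longleftrightarrow>
     (\<forall>x y z. {x, y} \<in> E \<longrightarrow> {y, z} \<in> E \<longrightarrow> {x, z} \<in> E \<longrightarrow> x = y \<or> y = z \<or> x = z)"

lemma triangle_free_card_le_delete_edge:
  assumes "finite V" and E: "E \<subseteq> {e. e \<subseteq> V \<and> card e = 2}" and "triangle_free E"
    and xy: "{x, y} \<in> E"
  shows "card E \<le> card {e \<in> E. e \<subseteq> V - {x, y}} + card (V - {x, y}) + 1"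
proof -
  define V' where "V' = V - {x, y}"
  define N where "N = {w \<in> V'. {x, w} \<in> E}"
  define M where "M = {w \<in> V'. {y, w} \<in> E}"
  have "x \<noteq> y" using xy E by fastforce
  have "finite E"
    using E \<open>finite V\<close> by (auto intro: finite_subset[of E "Pow V"])
  have "finite N" "finite M" "N \<union> M \<subseteq> V'"
    using \<open>finite V\<close> by (auto simp: N_def M_def V'_def)
  \<comment> \<open>A common neighbour of x and y would close a triangle with the edge xy.\<close>
  have "N \<inter> M = {}"
    using \<open>triangle_free E\<close> \<open>x \<noteq> y\<close> xy unfolding N_def M_def V'_def triangle_free_def by blast
  then have "card N + card M = card (N \<union> M)"
    using \<open>finite N\<close> \<open>finite M\<close> by (simp add: card_Un_disjoint)
  also have "\<dots> \<le> card V'"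
    using \<open>finite V\<close> \<open>N \<union> M \<subseteq> V'\<close> by (simp add: card_mono V'_def)
  finally have "card N + card M \<le> card V'" .
  define X where "X = (\<lambda>w. {x, w}) ` N \<union> (\<lambda>w. {y, w}) ` M"
  have "card (insert {x, y} X) \<le> Suc (card X)"
    using \<open>finite N\<close> \<open>finite M\<close> by (simp add: X_def card_insert_if)
  also have "card X \<le> card ((\<lambda>w. {x, w}) ` N) + card ((\<lambda>w. {y, w}) ` M)"
    unfolding X_def by (rule card_Un_le)
  also have "\<dots> \<le> card N + card M"
    using \<open>finite N\<close> \<open>finite M\<close> by (intro add_mono card_image_le)
  finally have card_X: "card (insert {x, y} X) \<le> card N + card M + 1" by simp
  have "E \<subseteq> {e \<in> E. e \<subseteq> V'} \<union> insert {x, y} X"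
  proof
    fix e assume "e \<in> E"
    then obtain a b where e: "e = {a, b}" "a \<noteq> b" "a \<in> V" "b \<in> V" using E by (auto simp: card_2_iff)
    show "e \<in> {e \<in> E. e \<subseteq> V'} \<union> insert {x, y} X"
      using \<open>e \<in> E\<close> e unfolding X_def N_def M_def V'_def
      by (cases "a \<in> {x, y}"; cases "b \<in> {x, y}") (auto simp: insert_commute)
  qed
  then have "card E \<le> card ({e \<in> E. e \<subseteq> V'} \<union> insert {x, y} X)"
    using \<open>finite E\<close> \<open>finite N\<close> \<open>finite M\<close> by (intro card_mono) (auto simp: X_def)
  also have "\<dots> \<le> card {e \<in> E. e \<subseteq> V'} + card (insert {x, y} X)"
    by (rule card_Un_le)
  finally show ?thesis using card_X \<open>card N + card M \<le> card V'\<close> unfolding V'_def by linarith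
qed

lemma mantel:
  assumes "finite V" and "E \<subseteq> {e. e \<subseteq> V \<and> card e = 2}" and "triangle_free E"
  shows "4 * card E \<le> card V ^ 2"
  using assms
proof (induction "card V" arbitrary: V E rule: less_induct)
  case less
  show ?case
  proof (cases "E = {}")
    case False
    then obtain x y where xy: "{x, y} \<in> E" "x \<noteq> y" "x \<in> V" "y \<in> V"
      using less.prems(2) by (force simp: card_2_iff)
    define V' where "V' = V - {x, y}"
    define E' where "E' = {e \<in> E. e \<subseteq> V'}"
    have card_V: "card V = card V' + 2"
      using xy \<open>finite V\<close> card_mono[OF \<open>finite V\<close>, of "{x, y}"]
      by (simp add: V'_def card_Diff_subset)
    have "4 * card E' \<le> card V' ^ 2"
    proof (rule less.hyps)
      show "E' \<subseteq> {e. e \<subseteq> V' \<and> card e = 2}" "triangle_free E'"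
        using less.prems(2,3) by (auto simp: E'_def triangle_free_def)
    qed (use card_V \<open>finite V\<close> V'_def in auto)
    moreover have "card E \<le> card E' + card V' + 1"
      using triangle_free_card_le_delete_edge[OF less.prems xy(1)] by (simp add: E'_def V'_def)
    ultimately show ?thesis
      unfolding card_V by (simp add: power2_eq_square algebra_simps)
  qed simp
qed

definition private_edge :: "'a set set \<Rightarrow> 'a set \<Rightarrow> 'a set \<Rightarrow> bool" where
  "private_edge T t e \<longleftrightarrow> e \<subseteq> t \<and> card e = 2 \<and> (\<forall>t'\<in>T. e \<subseteq> t' \<longrightarrow> t' = t)"

lemma private_edge_imp_edge: "private_edge T t e \<Longrightarrow> e \<subseteq> t \<and> card e = 2"
  unfolding private_edge_def by blast

lemma private_edgeD: "private_edge T t e \<Longrightarrow> t' \<in> T \<Longrightarrow> e \<subseteq> t' \<Longrightarrow> t' = t"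
  unfolding private_edge_def by blast

lemma triangle_on_iff:
  "triangle_on V {x, y, z} \<longleftrightarrow> {x, y, z} \<subseteq> V \<and> x \<noteq> y \<and> y \<noteq> z \<and> x \<noteq> z"
  by (auto simp: triangle_on_def card_insert_if)

lemma triangle_on_finite: "triangle_on V t \<Longrightarrow> finite t"
  unfolding triangle_on_def by (metis card.infinite zero_neq_numeral)

lemma has_rainbow_triangleI:
  assumes "triangle_on V {x, y, z}" and "t1 \<in> T" "t2 \<in> T" "t3 \<in> T"
    and "t1 \<noteq> t2" "t1 \<noteq> t3" "t2 \<noteq> t3"
    and "{x, y} \<subseteq> t1" "{y, z} \<subseteq> t2" "{x, z} \<subseteq> t3"
  shows "has_rainbow_triangle V T"
  unfolding has_rainbow_triangle_def using assms by blast

lemma rainbow_free_private_edge_disj: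
  assumes tri: "\<forall>t\<in>T. triangle_on V t" and "\<not> has_rainbow_triangle V T"
    and t: "{u, v, w} \<in> T" and "u \<noteq> v" "v \<noteq> w" "u \<noteq> w"
  shows "private_edge T {u, v, w} {u, v} \<or> private_edge T {u, v, w} {v, w}"
proof (rule ccontr)
  assume "\<not> ?thesis"
  then obtain t1 t2 where t1: "t1 \<in> T" "{u, v} \<subseteq> t1" "t1 \<noteq> {u, v, w}"
    and t2: "t2 \<in> T" "{v, w} \<subseteq> t2" "t2 \<noteq> {u, v, w}"
    using \<open>u \<noteq> v\<close> \<open>v \<noteq> w\<close> unfolding private_edge_def by auto
  have "t1 \<noteq> t2"
  proof
    assume "t1 = t2"
    then have "{u, v, w} \<subseteq> t1" using t1 t2 by auto
    moreover have "card t1 = card {u, v, w}"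
      using tri t1(1) t by (simp add: triangle_on_def)
    ultimately show False
      using t1 tri triangle_on_finite card_subset_eq by metis
  qed
  moreover have "triangle_on V {u, v, w}" using tri t by blast
  ultimately have "has_rainbow_triangle V T"
    using t1 t2 t by (intro has_rainbow_triangleI[of V u v w t1 T t2 "{u, v, w}"]) auto
  with \<open>\<not> has_rainbow_triangle V T\<close> show False ..
qed

lemma rainbow_free_two_private_edges:
  assumes tri: "\<forall>t\<in>T. triangle_on V t" and nr: "\<not> has_rainbow_triangle V T" and "t \<in> T"
  shows "\<exists>P. P \<subseteq> {e. private_edge T t e} \<and> card P = 2"
proof -
  obtain a b c where t: "t = {a, b, c}" and "a \<noteq> b" "a \<noteq> c" "b \<noteq> c"
    using tri \<open>t \<in> T\<close> by (auto simp: triangle_on_def card_3_iff)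
  have perms: "{b, a, c} = {a, b, c}" "{a, c, b} = {a, b, c}" "{b, a} = {a, b}" "{c, b} = {b, c}"
    by auto
  have "private_edge T t {a, b} \<or> private_edge T t {b, c}"
    using rainbow_free_private_edge_disj[OF tri nr, of a b c] \<open>t \<in> T\<close> \<open>a \<noteq> b\<close> \<open>a \<noteq> c\<close> \<open>b \<noteq> c\<close>
    unfolding t by blast
  moreover have "private_edge T t {a, b} \<or> private_edge T t {a, c}"
    using rainbow_free_private_edge_disj[OF tri nr, of b a c] \<open>t \<in> T\<close> \<open>a \<noteq> b\<close> \<open>a \<noteq> c\<close> \<open>b \<noteq> c\<close>
    unfolding t perms by blast
  moreover have "private_edge T t {a, c} \<or> private_edge T t {b, c}"
    using rainbow_free_private_edge_disj[OF tri nr, of a c b] \<open>t \<in> T\<close> \<open>a \<noteq> b\<close> \<open>a \<noteq> c\<close> \<open>b \<noteq> c\<close>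
    unfolding t perms by blast
  moreover have "{a, b} \<noteq> {b, c}" "{a, b} \<noteq> {a, c}" "{a, c} \<noteq> {b, c}"
    using \<open>a \<noteq> b\<close> \<open>a \<noteq> c\<close> \<open>b \<noteq> c\<close> by (auto simp: doubleton_eq_iff)
  ultimately obtain e e' where "e \<noteq> e'" "private_edge T t e" "private_edge T t e'"
    by metis
  then show ?thesis by (intro exI[of _ "{e, e'}"]) auto
qed

lemma rainbow_free_private_triangle_eq:
  assumes tri: "\<forall>t\<in>T. triangle_on V t" and "\<not> has_rainbow_triangle V T"
    and "t1 \<in> T" "t2 \<in> T" "t3 \<in> T"
    and p1: "private_edge T t1 {x, y}" and p2: "private_edge T t2 {y, z}"
    and p3: "private_edge T t3 {x, z}"
  shows "t1 = t2 \<and> t2 = t3"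
proof (rule ccontr)
  assume not_all_equal: "\<not> ?thesis"
  have sub: "{x, y} \<subseteq> t1" "{y, z} \<subseteq> t2" "{x, z} \<subseteq> t3"
    using p1 p2 p3 by (blast dest: private_edge_imp_edge)+
  \<comment> \<open>Two of the members coinciding would contain the third edge, so by privacy all three coincide.\<close>
  have "t1 \<noteq> t2" "t1 \<noteq> t3" "t2 \<noteq> t3"
  proof -
    show "t1 \<noteq> t2"
      using private_edgeD[OF p3 \<open>t1 \<in> T\<close>] sub not_all_equal by blast
    show "t1 \<noteq> t3"
      using private_edgeD[OF p2 \<open>t1 \<in> T\<close>] sub not_all_equal by blast
    show "t2 \<noteq> t3"
      using private_edgeD[OF p1 \<open>t2 \<in> T\<close>] sub not_all_equal by blast
  qed
  moreover have "triangle_on V {x, y, z}"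
  proof -
    have "card {x, y} = 2" "card {y, z} = 2" "card {x, z} = 2"
      using p1 p2 p3 by (blast dest: private_edge_imp_edge)+
    then have "x \<noteq> y" "y \<noteq> z" "x \<noteq> z"
      by auto
    moreover have "t1 \<subseteq> V" "t2 \<subseteq> V"
      using tri \<open>t1 \<in> T\<close> \<open>t2 \<in> T\<close> by (simp_all add: triangle_on_def)
    ultimately show ?thesis
      using sub by (auto simp: triangle_on_iff)
  qed
  ultimately have "has_rainbow_triangle V T"
    using \<open>t1 \<in> T\<close> \<open>t2 \<in> T\<close> \<open>t3 \<in> T\<close> sub by (intro has_rainbow_triangleI)
  with \<open>\<not> has_rainbow_triangle V T\<close> show False ..
qed

lemma rainbow_free_private_edges_triangle_free:
  assumes tri: "\<forall>t\<in>T. triangle_on V t" and nr: "\<not> has_rainbow_triangle V T"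
    and P: "\<And>t. t \<in> T \<Longrightarrow> P t \<subseteq> {e. private_edge T t e}"
    and card_P: "\<And>t. t \<in> T \<Longrightarrow> card (P t) \<le> 2"
  shows "triangle_free (\<Union>t\<in>T. P t)"
  unfolding triangle_free_def
proof (intro allI impI)
  fix x y z
  assume "{x, y} \<in> (\<Union>t\<in>T. P t)" "{y, z} \<in> (\<Union>t\<in>T. P t)" "{x, z} \<in> (\<Union>t\<in>T. P t)"
  then obtain t1 t2 t3 where "t1 \<in> T" "t2 \<in> T" "t3 \<in> T"
    and in_P: "{x, y} \<in> P t1" "{y, z} \<in> P t2" "{x, z} \<in> P t3"
    by blast
  then have "t1 = t2 \<and> t2 = t3"
    using P by (intro rainbow_free_private_triangle_eq[OF tri nr]) blast+
  then have three: "{{x, y}, {y, z}, {x, z}} \<subseteq> P t1"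
    using in_P by simp
  show "x = y \<or> y = z \<or> x = z"
  proof (rule ccontr)
    assume "\<not> (x = y \<or> y = z \<or> x = z)"
    then have "card {{x, y}, {y, z}, {x, z}} = 3"
      by (auto simp: card_insert_if doubleton_eq_iff)
    moreover have "finite t1"
      using tri \<open>t1 \<in> T\<close> triangle_on_finite by blast
    then have "finite (P t1)"
      using P[OF \<open>t1 \<in> T\<close>] by (auto dest: private_edge_imp_edge intro: finite_subset[of _ "Pow t1"])
    ultimately have "3 \<le> card (P t1)"
      using three card_mono by metis
    with card_P[OF \<open>t1 \<in> T\<close>] show False by simp
  qed
qed

lemma card_UN_private_edges:
  assumes "finite T" and P: "\<And>t. t \<in> T \<Longrightarrow> P t \<subseteq> {e. private_edge T t e}"
    and "\<And>t. t \<in> T \<Longrightarrow> finite (P t)"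
  shows "card (\<Union>t\<in>T. P t) = (\<Sum>t\<in>T. card (P t))"
proof (rule card_UN_disjoint)
  show "\<forall>t\<in>T. \<forall>t'\<in>T. t \<noteq> t' \<longrightarrow> P t \<inter> P t' = {}"
  proof (intro ballI impI)
    fix t t' assume "t \<in> T" "t' \<in> T" "t \<noteq> t'"
    have "t' = t" if "private_edge T t e" "private_edge T t' e" for e
      using private_edgeD[OF that(1) \<open>t' \<in> T\<close>] private_edge_imp_edge[OF that(2)] by blast
    then show "P t \<inter> P t' = {}"
      using P \<open>t \<in> T\<close> \<open>t' \<in> T\<close> \<open>t \<noteq> t'\<close> by blast
  qed
qed (use assms in auto)

theorem theorem2p1:
  fixes V :: "'a set" and T :: "'a set set" and n :: nat
  assumes "finite V" and "card V = n"
    and "\<forall>t\<in>T. triangle_on V t"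
    and "\<not> has_rainbow_triangle V T"
  shows "real (card T) \<le> real n ^ 2 / 8"
proof -
  obtain P where P: "\<And>t. t \<in> T \<Longrightarrow> P t \<subseteq> {e. private_edge T t e} \<and> card (P t) = 2"
    using rainbow_free_two_private_edges[OF assms(3,4)] by metis
  have "finite T"
    using assms(1,3) by (auto simp: triangle_on_def intro: finite_subset[of T "Pow V"])
  then have "card (\<Union>t\<in>T. P t) = 2 * card T"
    using P card_UN_private_edges[of T P] by (simp add: card_ge_0_finite)
  moreover have "4 * card (\<Union>t\<in>T. P t) \<le> card V ^ 2"
  proof (rule mantel[OF \<open>finite V\<close>])
    show "(\<Union>t\<in>T. P t) \<subseteq> {e. e \<subseteq> V \<and> card e = 2}"
      using P assms(3) by (fastforce dest: private_edge_imp_edge simp: triangle_on_def)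
    show "triangle_free (\<Union>t\<in>T. P t)"
      using P by (intro rainbow_free_private_edges_triangle_free[OF assms(3,4)]) auto
  qed
  ultimately have "8 * card T \<le> n ^ 2"
    using assms(2) by simp
  then show ?thesis
    by (simp add: field_simps flip: of_nat_power of_nat_mult of_nat_le_iff)
qed

end
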